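(* Let $n>1$ be a prime power pseudoperfect number such that $n-1$ is prime. Then $n(n-1)$ is a prime power Giuga number.
   Context: A prime power pseudoperfect number is an integer $n>1$ satisfying $\sum_{p^k\mid n}\frac{1}{p^k}+\frac1n=1$, where the sum ranges over all prime powers $p^k$ ($p$ prime, $k\ge1$) dividing $n$. A prime power Giuga number is a composite positive integer $m$ such that $\sum_{p^k\mid m}\frac{1}{p^k}-\frac1m$ is a positive integer, the sum again over all prime powers $p^k$ ($k\ge1$) dividing $m$. *)

theory Defs
  imports "HOL-Number_Theory.Number_Theory"
begin

definition pp_recip_sum :: "nat \<Rightarrow> rat" where
  "pp_recip_sum n = (\<Sum>q\<in>primepow_factors n. 1 / of_nat q)"

definition pp_pseudoperfect :: "nat \<Rightarrow> bool" where
  "pp_pseudoperfect n \<longleftrightarrow> n > 1 \<and> pp_recip_sum n + 1 / of_nat n = 1"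

definition pp_giuga :: "nat \<Rightarrow> bool" where
  "pp_giuga m \<longleftrightarrow> m > 1 \<and> \<not> prime m \<and>
     (\<exists>k::nat. k > 0 \<and> pp_recip_sum m - 1 / of_nat m = of_nat k)"

end

theory Submission
  imports Defs
begin

text \<open>Prime power reciprocal sums are additive over coprime factors, and a prime p contributes
  just 1/p. Since n = p + 1 is coprime to p, the pseudoperfect equation for n gives
  pp_recip_sum (n p) - 1/(n p) = 1 - 1/n + 1/p - 1/(n p) = 1 + (n - p - 1)/(n p) = 1.\<close>

lemma primepow_factors_mult_coprime:
  fixes a b :: nat
  assumes "coprime a b"
  shows "primepow_factors (a * b) = primepow_factors a \<union> primepow_factors b"
proof
  show "primepow_factors (a * b) \<subseteq> primepow_factors a \<union> primepow_factors b"
  proof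
    fix q assume "q \<in> primepow_factors (a * b)"
    then have q: "primepow q" "q dvd a * b" by (auto simp: primepow_factors_def)
    then obtain r k where r: "prime r" "k > 0" "q = r ^ k" by (auto simp: primepow_def)
    have "r dvd a * b" using q(2) r dvd_power[of k r] dvd_trans by blast
    then consider "r dvd a" | "r dvd b" using r(1) prime_dvd_mult_iff by blast
    then show "q \<in> primepow_factors a \<union> primepow_factors b"
    proof cases
      case 1
      then have "coprime q b"
        using assms r by (simp add: coprime_power_left_iff) (meson coprime_imp_coprime dvd_trans)
      then have "q dvd a" using q(2) by (metis coprime_dvd_mult_left_iff)
      then show ?thesis using q(1) by (simp add: primepow_factors_def)
    next
      case 2
      then have "coprime q a"
        using assms[unfolded coprime_commute[of a]] r
        by (simp add: coprime_power_left_iff) (meson coprime_imp_coprime dvd_trans)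
      then have "q dvd b" using q(2) by (metis coprime_dvd_mult_right_iff)
      then show ?thesis using q(1) by (simp add: primepow_factors_def)
    qed
  qed
qed (auto simp: primepow_factors_def)

lemma primepow_factors_prime:
  fixes p :: nat
  assumes "prime p"
  shows "primepow_factors p = {p}"
proof -
  have "q = p" if "primepow q" "q dvd p" for q
    using that assms by (metis primepow_gt_Suc_0 prime_nat_iff One_nat_def less_irrefl)
  then show ?thesis using assms by (auto simp: primepow_factors_def primepow_prime)
qed

lemma pp_recip_sum_mult_coprime:
  fixes a b :: nat
  assumes "a > 0" "b > 0" "coprime a b"
  shows "pp_recip_sum (a * b) = pp_recip_sum a + pp_recip_sum b"
proof -
  have "primepow_factors a \<inter> primepow_factors b = {}"
  proof (rule ccontr)
    assume "primepow_factors a \<inter> primepow_factors b \<noteq> {}"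
    then obtain q where q: "primepow q" "q dvd a" "q dvd b" by (auto simp: primepow_factors_def)
    then have "is_unit q" using assms(3) coprime_common_divisor by blast
    with q(1) show False using primepow_gt_Suc_0 by fastforce
  qed
  then show ?thesis
    using assms by (simp add: pp_recip_sum_def primepow_factors_mult_coprime finite_primepow_factors
        sum.union_disjoint)
qed

lemma pp_recip_sum_prime:
  fixes p :: nat
  assumes "prime p"
  shows "pp_recip_sum p = 1 / of_nat p"
  using assms by (simp add: pp_recip_sum_def primepow_factors_prime)

lemma pp_recip_sum_pseudoperfect_times_predecessor:
  fixes p :: nat
  assumes "prime p" and "pp_pseudoperfect (p + 1)"
  shows "pp_recip_sum ((p + 1) * p) - 1 / of_nat ((p + 1) * p) = 1"
proof -
  have "p > 0" using assms(1) prime_gt_0_nat by blast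
  have "coprime (p + 1) p" by simp
  then have "pp_recip_sum ((p + 1) * p) = pp_recip_sum (p + 1) + 1 / of_nat p"
    using assms(1) \<open>p > 0\<close> pp_recip_sum_mult_coprime[of "p + 1" p]
    by (simp only: pp_recip_sum_prime)
  also have "pp_recip_sum (p + 1) = 1 - 1 / of_nat (p + 1)"
    using assms(2) by (simp add: pp_pseudoperfect_def)
  finally have "pp_recip_sum ((p + 1) * p) = 1 + (1 / of_nat p - 1 / of_nat (p + 1))"
    by simp
  also have "1 / of_nat p - 1 / of_nat (p + 1) = (1::rat) / of_nat ((p + 1) * p)"
    using \<open>p > 0\<close> by (simp add: field_simps)
  finally show ?thesis by simp
qed

theorem proposition5:
  fixes n :: nat
  assumes "n > 1" and "pp_pseudoperfect n" and "prime (n - 1)"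
  shows "pp_giuga (n * (n - 1))"
proof -
  define p where "p = n - 1"
  have "prime p" and n: "n = p + 1" using assms by (auto simp: p_def)
  then have "p > 1" using prime_gt_1_nat by blast
  have "pp_recip_sum (n * p) - 1 / of_nat (n * p) = of_nat (1::nat)"
    using pp_recip_sum_pseudoperfect_times_predecessor[OF \<open>prime p\<close>] assms(2)
    unfolding n by simp
  moreover have "\<not> prime (n * p)"
    using \<open>p > 1\<close> n prime_product[of n p] by linarith
  moreover have "n * p > 1"
    using \<open>p > 1\<close> n by (simp add: less_1_mult)
  ultimately show ?thesis unfolding pp_giuga_def p_def[symmetric] by blast
qed

end
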